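(* Let $m<M$ be real numbers and let $x_1,\dots,x_n$ be real numbers with $m\le x_i\le M$ for $i=1,\dots,n$, not all equal. Let $m_r=\frac1n\sum_{i=1}^n(x_i-\bar x)^r$ with $\bar x=\frac1n\sum_{i=1}^n x_i$, let $S=\sqrt{m_2}$, and define $\alpha_3=\sqrt{m_3^2/m_2^3}$, $\alpha_4=m_4/m_2^2$ and $q=(M-m)/S$. Then $$\alpha_4-\alpha_3^2\le\frac{q^2}{4}.$$
   Context: $\alpha_3$ (skewness), $\alpha_4$ (kurtosis) and $q$ (studentized range) are as defined in the claim; $m_r$ is the $r$-th central moment of the numbers $x_1,\dots,x_n$. *)

theory Defs
  imports Complex_Main
begin

text \<open>Data x_1..x_n represented as x :: nat => real on indices {1..n}.\<close>

definition mean :: "nat \<Rightarrow> (nat \<Rightarrow> real) \<Rightarrow> real" where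
  "mean n x = (\<Sum>i=1..n. x i) / real n"

definition central_moment :: "nat \<Rightarrow> nat \<Rightarrow> (nat \<Rightarrow> real) \<Rightarrow> real" where
  "central_moment r n x = (\<Sum>i=1..n. (x i - mean n x) ^ r) / real n"

definition std_dev :: "nat \<Rightarrow> (nat \<Rightarrow> real) \<Rightarrow> real" where
  "std_dev n x = sqrt (central_moment 2 n x)"

definition skewness :: "nat \<Rightarrow> (nat \<Rightarrow> real) \<Rightarrow> real" where
  "skewness n x = sqrt ((central_moment 3 n x)^2 / (central_moment 2 n x)^3)"

definition kurtosis :: "nat \<Rightarrow> (nat \<Rightarrow> real) \<Rightarrow> real" where
  "kurtosis n x = central_moment 4 n x / (central_moment 2 n x)^2"

definition studentized_range :: "real \<Rightarrow> real \<Rightarrow> nat \<Rightarrow> (nat \<Rightarrow> real) \<Rightarrow> real" where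
  "studentized_range m M n x = (M - m) / std_dev n x"

end

theory Submission
  imports Defs
begin

text \<open>Put \<open>y\<^sub>i = x\<^sub>i - \<mu>\<close> with \<open>\<mu>\<close> the mean, so that \<open>a \<le> y\<^sub>i \<le> b\<close> for \<open>a = m - \<mu>\<close>, \<open>b = M - \<mu>\<close>.
  Summing \<open>(y\<^sub>i - a)(b - y\<^sub>i) y\<^sub>i\<^sup>2 \<ge> 0\<close> gives \<open>m\<^sub>4 \<le> (a + b) m\<^sub>3 - a b m\<^sub>2\<close>. Multiplying by \<open>m\<^sub>2\<close>
  and completing the square in \<open>m\<^sub>3\<close> yields \<open>m\<^sub>4 m\<^sub>2 - m\<^sub>3\<^sup>2 \<le> (b - a)\<^sup>2 m\<^sub>2\<^sup>2 / 4\<close>;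
  dividing by \<open>m\<^sub>2\<^sup>3\<close> is the claim, since \<open>b - a = M - m\<close>.\<close>

lemma sum_power4_le_of_bounded:
  fixes y :: "'a \<Rightarrow> real"
  assumes "\<And>k. k \<in> I \<Longrightarrow> a \<le> y k \<and> y k \<le> b"
  shows "(\<Sum>k\<in>I. y k ^ 4) \<le> (a + b) * (\<Sum>k\<in>I. y k ^ 3) - a * b * (\<Sum>k\<in>I. y k ^ 2)"
proof -
  have "0 \<le> (\<Sum>k\<in>I. (y k - a) * (b - y k) * y k ^ 2)"
    using assms by (intro sum_nonneg) simp
  also have "\<dots> = (a + b) * (\<Sum>k\<in>I. y k ^ 3) - (\<Sum>k\<in>I. y k ^ 4) - a * b * (\<Sum>k\<in>I. y k ^ 2)"
    by (simp add: algebra_simps power2_eq_square power3_eq_cube power4_eq_xxxx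
        sum.distrib sum_subtractf sum_distrib_left)
  finally show ?thesis by linarith
qed

lemma moment_gap_le_of_interval_bound:
  fixes a b s2 s3 s4 :: real
  assumes "0 \<le> s2" and "s4 \<le> (a + b) * s3 - a * b * s2"
  shows "s4 * s2 - s3 ^ 2 \<le> (b - a) ^ 2 / 4 * s2 ^ 2"
proof -
  have "s4 * s2 \<le> ((a + b) * s3 - a * b * s2) * s2"
    by (rule mult_right_mono[OF assms(2,1)])
  also have "\<dots> = s3 ^ 2 - (s3 - (a + b) * s2 / 2) ^ 2 + (b - a) ^ 2 / 4 * s2 ^ 2"
    by (simp add: power2_eq_square field_simps)
  also have "\<dots> \<le> s3 ^ 2 + (b - a) ^ 2 / 4 * s2 ^ 2"
    by simp
  finally show ?thesis by simp
qed

lemma central_moment_4_le: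
  assumes "\<And>i. i \<in> {1..n} \<Longrightarrow> m \<le> x i \<and> x i \<le> M"
  shows "central_moment 4 n x
    \<le> (m - mean n x + (M - mean n x)) * central_moment 3 n x
       - (m - mean n x) * (M - mean n x) * central_moment 2 n x"
proof -
  have "(\<Sum>i=1..n. (x i - mean n x) ^ 4)
    \<le> (m - mean n x + (M - mean n x)) * (\<Sum>i=1..n. (x i - mean n x) ^ 3)
       - (m - mean n x) * (M - mean n x) * (\<Sum>i=1..n. (x i - mean n x) ^ 2)"
    using assms by (intro sum_power4_le_of_bounded) auto
  then show ?thesis
    unfolding central_moment_def times_divide_eq_right diff_divide_distrib[symmetric]
    by (rule divide_right_mono) simp
qed

lemma central_moment_2_pos:
  assumes "i \<in> {1..n}" "j \<in> {1..n}" "x i \<noteq> x j"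
  shows "central_moment 2 n x > 0"
proof -
  obtain k where k: "k \<in> {1..n}" "x k \<noteq> mean n x"
    using assms by metis
  have "0 < (x k - mean n x) ^ 2"
    using k by simp
  also have "\<dots> \<le> (\<Sum>i=1..n. (x i - mean n x) ^ 2)"
    using k by (intro member_le_sum) auto
  finally show ?thesis
    using k by (simp add: central_moment_def)
qed

lemma central_moment_2_nonneg: "central_moment 2 n x \<ge> 0"
  by (simp add: central_moment_def sum_nonneg)

lemma kurtosis_minus_skewness_sq:
  assumes "central_moment 2 n x > 0"
  shows "kurtosis n x - (skewness n x) ^ 2
    = (central_moment 4 n x * central_moment 2 n x - (central_moment 3 n x) ^ 2)
      / (central_moment 2 n x) ^ 3"
  using assms by (simp add: kurtosis_def skewness_def field_simps power2_eq_square power3_eq_cube)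

lemma studentized_range_sq:
  "(studentized_range m M n x) ^ 2 = (M - m) ^ 2 / central_moment 2 n x"
  using central_moment_2_nonneg[of n x]
  by (simp add: studentized_range_def std_dev_def power_divide)

theorem corollary2p5:
  fixes m M :: real and n :: nat and x :: "nat \<Rightarrow> real"
  assumes "m < M"
    and "\<And>i. i \<in> {1..n} \<Longrightarrow> m \<le> x i \<and> x i \<le> M"
    and "\<exists>i\<in>{1..n}. \<exists>j\<in>{1..n}. x i \<noteq> x j"
  shows "kurtosis n x - (skewness n x)^2 \<le> (studentized_range m M n x)^2 / 4"
proof -
  have m2_pos: "central_moment 2 n x > 0"
    using assms(3) central_moment_2_pos by blast
  have gap: "central_moment 4 n x * central_moment 2 n x - (central_moment 3 n x) ^ 2
      \<le> (M - m) ^ 2 / 4 * (central_moment 2 n x) ^ 2"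
    using moment_gap_le_of_interval_bound[OF less_imp_le[OF m2_pos] central_moment_4_le[OF assms(2)]]
    by simp
  have "kurtosis n x - (skewness n x) ^ 2
      = (central_moment 4 n x * central_moment 2 n x - (central_moment 3 n x) ^ 2)
        / (central_moment 2 n x) ^ 3"
    using kurtosis_minus_skewness_sq[OF m2_pos] .
  also have "\<dots> \<le> (M - m) ^ 2 / 4 * (central_moment 2 n x) ^ 2 / (central_moment 2 n x) ^ 3"
    using gap m2_pos by (intro divide_right_mono) auto
  also have "\<dots> = (studentized_range m M n x) ^ 2 / 4"
    unfolding studentized_range_sq using m2_pos by (simp add: power2_eq_square power3_eq_cube)
  finally show ?thesis .
qed

end
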